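(* Let $T$ be a tree rooted at a vertex $r$, and let $x_1,\dots,x_t$ be the vertices of height one (non-root vertices all of whose children are leaves and which have at least one child). For each $i$, let $v_i$ be the non-leaf neighbor (parent) of $x_i$, let $k_i$ be the number of leaves adjacent to $v_i$, and let $r_i$ be the number of leaves adjacent to $x_i$. (1) If $k_i\ge1$ and $r_i\ge2$ for some $i$, then $b_{tR}(T)=1$. (2) If $k_i\ge 2$ and $r_i=1$ for some $i$, then $b_{tR}(T)\le \deg(v_i)-k_i$. (3) For integers $t\ge3$ and $2\le k\le t-1$, $b_{tR}(S(k,t))=t-k$.
   Context: A TRDF on $G=(V,E)$ is a function $f:V\to\{0,1,2\}$ such that every $v$ with $f(v)=0$ has a neighbor $u$ with $f(u)=2$ and the subgraph induced by $\{v:f(v)>0\}$ has no isolated vertices; $\gamma_{tR}(G)$ is its minimum weight. $b_{tR}(G)$ is the minimum $|E'|$ such that $G-E'$ has no isolated vertices and $\gamma_{tR}(G-E')>\gamma_{tR}(G)$ ($\infty$ if none). In a rooted tree, the height of a vertex $x$ is the length of a longest path from $x$ down to a leaf descendant. For $t\ge 2$, $k\ge1$, the wounded spider $S(k,t)$ is the star $K_{1,t}$ with $t-k$ of its edges subdivided once. *)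

theory Defs
  imports Main "HOL-Library.Extended_Nat"
begin

definition graph :: "'a set \<Rightarrow> 'a set set \<Rightarrow> bool" where
  "graph V E \<longleftrightarrow> finite V \<and> (\<forall>e\<in>E. \<exists>u v. e = {u, v} \<and> u \<noteq> v \<and> u \<in> V \<and> v \<in> V)"

definition adj :: "'a set set \<Rightarrow> 'a \<Rightarrow> 'a \<Rightarrow> bool" where
  "adj E u v \<longleftrightarrow> u \<noteq> v \<and> {u, v} \<in> E"

definition nbrs :: "'a set \<Rightarrow> 'a set set \<Rightarrow> 'a \<Rightarrow> 'a set" where
  "nbrs V E v = {u \<in> V. adj E v u}"

definition deg :: "'a set \<Rightarrow> 'a set set \<Rightarrow> 'a \<Rightarrow> nat" where
  "deg V E v = card (nbrs V E v)"

definition leaf :: "'a set \<Rightarrow> 'a set set \<Rightarrow> 'a \<Rightarrow> bool" where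
  "leaf V E v \<longleftrightarrow> v \<in> V \<and> deg V E v = 1"

definition no_isolated :: "'a set \<Rightarrow> 'a set set \<Rightarrow> bool" where
  "no_isolated V E \<longleftrightarrow> (\<forall>v\<in>V. \<exists>u\<in>V. adj E v u)"

definition walk :: "'a set \<Rightarrow> 'a set set \<Rightarrow> 'a list \<Rightarrow> bool" where
  "walk V E xs \<longleftrightarrow> xs \<noteq> [] \<and> set xs \<subseteq> V \<and> (\<forall>i. Suc i < length xs \<longrightarrow> adj E (xs ! i) (xs ! Suc i))"

definition connected_graph :: "'a set \<Rightarrow> 'a set set \<Rightarrow> bool" where
  "connected_graph V E \<longleftrightarrow> (\<forall>u\<in>V. \<forall>v\<in>V. \<exists>xs. walk V E xs \<and> hd xs = u \<and> last xs = v)"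

definition is_cycle :: "'a set \<Rightarrow> 'a set set \<Rightarrow> 'a list \<Rightarrow> bool" where
  "is_cycle V E xs \<longleftrightarrow> walk V E xs \<and> distinct xs \<and> length xs \<ge> 3 \<and> adj E (last xs) (hd xs)"

definition tree :: "'a set \<Rightarrow> 'a set set \<Rightarrow> bool" where
  "tree V E \<longleftrightarrow> graph V E \<and> V \<noteq> {} \<and> connected_graph V E \<and> \<not> (\<exists>xs. is_cycle V E xs)"

definition dist :: "'a set \<Rightarrow> 'a set set \<Rightarrow> 'a \<Rightarrow> 'a \<Rightarrow> nat" where
  "dist V E u v = (LEAST n. \<exists>xs. walk V E xs \<and> hd xs = u \<and> last xs = v \<and> length xs = Suc n)"

definition child :: "'a set \<Rightarrow> 'a set set \<Rightarrow> 'a \<Rightarrow> 'a \<Rightarrow> 'a \<Rightarrow> bool" where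
  "child V E r x y \<longleftrightarrow> x \<in> V \<and> y \<in> V \<and> adj E x y \<and> dist V E r y = Suc (dist V E r x)"

definition TRDF :: "'a set \<Rightarrow> 'a set set \<Rightarrow> ('a \<Rightarrow> nat) \<Rightarrow> bool" where
  "TRDF V E f \<longleftrightarrow> (\<forall>v\<in>V. f v \<le> 2)
     \<and> (\<forall>v\<in>V. f v = 0 \<longrightarrow> (\<exists>u\<in>V. adj E v u \<and> f u = 2))
     \<and> (\<forall>v\<in>V. f v > 0 \<longrightarrow> (\<exists>u\<in>V. adj E v u \<and> f u > 0))"

definition gamma_tR :: "'a set \<Rightarrow> 'a set set \<Rightarrow> nat" where
  "gamma_tR V E = (LEAST w. \<exists>f. TRDF V E f \<and> w = (\<Sum>v\<in>V. f v))"

definition bad_set :: "'a set \<Rightarrow> 'a set set \<Rightarrow> 'a set set \<Rightarrow> bool" where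
  "bad_set V E E' \<longleftrightarrow> E' \<subseteq> E \<and> no_isolated V (E - E') \<and> gamma_tR V (E - E') > gamma_tR V E"

definition b_tR :: "'a set \<Rightarrow> 'a set set \<Rightarrow> enat" where
  "b_tR V E = (if \<exists>E'. bad_set V E E'
               then enat (LEAST k. \<exists>E'. bad_set V E E' \<and> card E' = k) else \<infinity>)"

text \<open>Wounded spider S(k,t) on vertices {0..2t-k}: centre 0, the star leaves 1..t;
  for i in 1..t-k the edge {0,i} is subdivided by the new vertex t+i.\<close>

definition spider_V :: "nat \<Rightarrow> nat \<Rightarrow> nat set" where
  "spider_V k t = {0 .. t + (t - k)}"

definition spider_E :: "nat \<Rightarrow> nat \<Rightarrow> nat set set" where
  "spider_E k t = {{0, i} | i. t - k < i \<and> i \<le> t}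
                 \<union> {{0, t + i} | i. 1 \<le> i \<and> i \<le> t - k}
                 \<union> {{t + i, i} | i. 1 \<le> i \<and> i \<le> t - k}"

end

theory Submission
  imports Defs
begin

(* In both tree cases a deletion set E' is shown to be bad by turning every TRDF h of T - E' into a
   cheaper TRDF of T.  In (1) delete vx: then x is the centre of a star with at least two pendant
   leaves, which forces weight at least 3 on x and two of these leaves, while the leaf at v forces
   h(v) > 0; so 2 on x and 0 on the two leaves is cheaper.  In (2) delete the deg(v) - k_i edges from
   v to its non-leaf neighbours: now v is such a star centre, and x with a leaf child y carries weight
   at least 2, so 2 on v and x and 0 on y and two leaves of v is cheaper.
   For S(k,t) the upper bound t - k is (2) at the centre.  Conversely, a deletion set leaving no
   isolated vertex can only contain edges from the centre to subdivision vertices, and if it misses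
   one of these t - k edges, then 2 on the centre, 0 on its k leaves and 1 elsewhere is still a TRDF,
   of weight 2 + 2(t - k) = gamma_tR(S(k,t)). *)

lemma adj_commute: "adj E u v \<longleftrightarrow> adj E v u"
  unfolding adj_def by (auto simp: insert_commute)

lemma adj_in_V: "graph V E \<Longrightarrow> adj E u v \<Longrightarrow> u \<in> V \<and> v \<in> V"
  unfolding graph_def adj_def by (metis doubleton_eq_iff)

lemma adj_Diff: "adj (E - F) u v \<longleftrightarrow> adj E u v \<and> {u, v} \<notin> F"
  unfolding adj_def by auto

lemma finite_edges: "graph V E \<Longrightarrow> finite E"
proof -
  assume g: "graph V E"
  then have "E \<subseteq> Pow V" unfolding graph_def by auto
  with g show ?thesis unfolding graph_def by (auto intro: finite_subset)
qed

lemma finite_nbrs: "graph V E \<Longrightarrow> finite (nbrs V E v)"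
  unfolding graph_def nbrs_def by auto

lemma leaf_adj_unique:
  assumes g: "graph V E" and "leaf V E a" "adj E a u" "adj E a w"
  shows "u = w"
proof -
  have "card (nbrs V E a) = 1" using assms(2) unfolding leaf_def deg_def by auto
  moreover have "u \<in> nbrs V E a" "w \<in> nbrs V E a"
    using assms(3,4) adj_in_V[OF g] unfolding nbrs_def by auto
  ultimately show ?thesis by (metis card_1_singletonE singletonD)
qed

lemma leaf_only_neighbour:
  assumes g: "graph V E" and sub: "\<And>p q. adj E' p q \<Longrightarrow> adj E p q"
    and "leaf V E z" "adj E c z" "adj E' z u"
  shows "u = c"
  using leaf_adj_unique[OF g assms(3) sub[OF assms(5)]] assms(4) adj_commute[of E c z] by simp

lemma nonleaf_other_neighbour:
  assumes g: "graph V E" and "w \<in> V" "\<not> leaf V E w" "adj E w v"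
  shows "\<exists>u\<in>V. adj E w u \<and> u \<noteq> v"
proof (rule ccontr)
  assume "\<not> ?thesis"
  then have "nbrs V E w = {v}"
    using assms(4) adj_in_V[OF g assms(4)] unfolding nbrs_def by auto
  then show False using assms(2,3) unfolding leaf_def deg_def by simp
qed

section \<open>Walks and rooted trees\<close>

lemma walk_iff_successively:
  "walk V E xs \<longleftrightarrow> xs \<noteq> [] \<and> set xs \<subseteq> V \<and> successively (adj E) xs"
  unfolding walk_def successively_conv_nth by auto

lemma walk_take: "walk V E xs \<Longrightarrow> 0 < n \<Longrightarrow> walk V E (take n xs)"
  unfolding walk_def by (auto dest: in_set_takeD)

lemma dist_le_walk_length:
  assumes "walk V E xs" "hd xs = u" "last xs = w"
  shows "dist V E u w \<le> length xs - 1"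
proof -
  have "length xs = Suc (length xs - 1)" using assms(1) walk_def by (cases xs) auto
  then show ?thesis unfolding dist_def using assms by (intro Least_le) blast
qed

lemma shortest_walk_exists:
  assumes "walk V E xs" "hd xs = u" "last xs = w"
  shows "\<exists>ys. walk V E ys \<and> hd ys = u \<and> last ys = w \<and> length ys = Suc (dist V E u w)"
proof -
  have "length xs = Suc (length xs - 1)" using assms(1) walk_def by (cases xs) auto
  then have "\<exists>n ys. walk V E ys \<and> hd ys = u \<and> last ys = w \<and> length ys = Suc n"
    using assms by blast
  from LeastI_ex[OF this] show ?thesis unfolding dist_def by blast
qed

lemma distinct_walk_exists:
  "walk V E xs \<Longrightarrow>
    \<exists>ys. walk V E ys \<and> distinct ys \<and> hd ys = hd xs \<and> last ys = last xs \<and> set ys \<subseteq> set xs"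
proof (induction "length xs" arbitrary: xs rule: less_induct)
  case less
  show ?case
  proof (cases "distinct xs")
    case True
    then show ?thesis using less.prems by blast
  next
    case False
    then obtain as z bs cs where xs: "xs = as @ [z] @ bs @ [z] @ cs"
      using not_distinct_decomp by blast
    let ?ys = "as @ [z] @ cs"
    have "successively (adj E) xs" using less.prems unfolding walk_iff_successively by auto
    then have "successively (adj E) (as @ [z]) \<and> successively (adj E) (z # cs)"
      unfolding xs successively_append_iff by (simp add: successively_Cons)
    then have "successively (adj E) ((as @ [z]) @ cs)"
      unfolding successively_append_iff successively_Cons by auto
    then have "walk V E ?ys" using less.prems unfolding walk_iff_successively xs by auto
    moreover have "length ?ys < length xs" using xs by simp
    ultimately obtain ys where
      "walk V E ys \<and> distinct ys \<and> hd ys = hd ?ys \<and> last ys = last ?ys \<and> set ys \<subseteq> set ?ys"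
      using less.hyps by blast
    moreover have "hd ?ys = hd xs" "last ?ys = last xs" "set ?ys \<subseteq> set xs"
      using xs by (cases as; auto)+
    ultimately show ?thesis by (metis subset_trans)
  qed
qed

text \<open>Shortened to a path, such a walk would close up through x to a cycle.\<close>

lemma tree_no_detour:
  assumes t: "tree V E" and "adj E x a" "adj E x b" "a \<noteq> b"
    and p: "walk (V - {x}) E p" "hd p = a" "last p = b"
  shows False
proof -
  obtain q where q: "walk (V - {x}) E q" "distinct q" "hd q = a" "last q = b"
    using distinct_walk_exists[OF p(1)] p(2,3) by auto
  have g: "graph V E" using t tree_def by auto
  have xV: "x \<in> V" using adj_in_V[OF g assms(2)] by auto
  obtain c q' where q': "q = c # q'" using q walk_def by (cases q) auto
  have "q' \<noteq> []" using q q' assms(4) by auto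
  then have "is_cycle V E (x # q)"
    using q q' xV assms(2,3) adj_commute[of E b x]
    unfolding is_cycle_def walk_iff_successively by (auto simp: successively_Cons Suc_le_eq)
  then show False using t unfolding tree_def by auto
qed

lemma shortest_walk_avoids:
  assumes P: "walk V E P" "hd P = r" "last P = a" "length P = Suc (dist V E r a)"
    and "dist V E r a \<le> dist V E r x" "x \<noteq> a"
  shows "x \<notin> set P"
proof
  assume "x \<in> set P"
  then obtain i where i: "i < length P" "P ! i = x" by (metis in_set_conv_nth)
  have "walk V E (take (Suc i) P)" using walk_take[OF P(1)] by auto
  moreover have "hd (take (Suc i) P) = r" using P(2) i by (cases P) auto
  moreover have "last (take (Suc i) P) = x" using i by (simp add: take_Suc_conv_app_nth)
  ultimately have "dist V E r x \<le> i" using dist_le_walk_length i by fastforce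
  then have "i = length P - 1" using assms(4,5) i by auto
  then show False using i assms(3,6) by (metis last_conv_nth list.size(3) not_less_zero)
qed

lemma tree_shortest_walk_exists:
  assumes "tree V E" "u \<in> V" "w \<in> V"
  shows "\<exists>P. walk V E P \<and> hd P = u \<and> last P = w \<and> length P = Suc (dist V E u w)"
  using assms shortest_walk_exists unfolding tree_def connected_graph_def by metis

text \<open>Joining shortest walks from r to a and to b gives a walk from a to b avoiding x.\<close>

lemma tree_lower_neighbour_unique:
  assumes t: "tree V E" and r: "r \<in> V" and "adj E x a" "adj E x b"
    and "dist V E r a \<le> dist V E r x" "dist V E r b \<le> dist V E r x"
  shows "a = b"
proof (rule ccontr)
  assume "a \<noteq> b"
  have g: "graph V E" using t tree_def by auto
  have "a \<in> V" "b \<in> V" using adj_in_V[OF g] assms(3,4) by auto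
  then obtain P Q where
    P: "walk V E P" "hd P = r" "last P = a" "length P = Suc (dist V E r a)" and
    Q: "walk V E Q" "hd Q = r" "last Q = b" "length Q = Suc (dist V E r b)"
    using tree_shortest_walk_exists[OF t r] by metis
  have "x \<noteq> a" "x \<noteq> b" using assms(3,4) unfolding adj_def by auto
  then have avoid: "x \<notin> set P" "x \<notin> set Q"
    using shortest_walk_avoids[OF P] shortest_walk_avoids[OF Q] assms(5,6) by auto
  obtain Q' where Q': "Q = r # Q'" using Q walk_def by (cases Q) auto
  have "P \<noteq> []" using P walk_def by auto
  have "successively (adj E) (rev P)"
    using P(1) unfolding walk_iff_successively by (simp add: successively_rev adj_commute[of E])
  then have "successively (adj E) (rev P @ Q')"
    using Q Q' P(2) \<open>P \<noteq> []\<close> unfolding walk_iff_successively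
    by (auto simp: successively_append_iff successively_Cons last_rev)
  then have "walk (V - {x}) E (rev P @ Q')"
    using P Q Q' avoid \<open>P \<noteq> []\<close> unfolding walk_iff_successively by auto
  moreover have "hd (rev P @ Q') = a" using P \<open>P \<noteq> []\<close> by (simp add: hd_rev)
  moreover have "last (rev P @ Q') = b"
    using Q Q' P \<open>P \<noteq> []\<close> by (cases "Q' = []") (auto simp: last_rev)
  ultimately show False using tree_no_detour[OF t assms(3,4) \<open>a \<noteq> b\<close>] by blast
qed

lemma dist_adj_le:
  assumes t: "tree V E" and "r \<in> V" "x \<in> V" "adj E x u"
  shows "dist V E r u \<le> Suc (dist V E r x)"
proof -
  have g: "graph V E" using t tree_def by auto
  obtain P where P: "walk V E P" "hd P = r" "last P = x" "length P = Suc (dist V E r x)"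
    using tree_shortest_walk_exists[OF t assms(2,3)] by auto
  have "walk V E (P @ [u])"
    using P adj_in_V[OF g assms(4)] assms(4)
    unfolding walk_iff_successively successively_append_iff by auto
  from dist_le_walk_length[OF this] P show ?thesis by (cases P) auto
qed

lemma child_if_adj_not_parent:
  assumes t: "tree V E" and r: "r \<in> V" and parent: "child V E r v x"
    and "adj E x u" "u \<noteq> v"
  shows "child V E r x u"
proof -
  have g: "graph V E" using t tree_def by auto
  have x: "x \<in> V" and "u \<in> V" using parent adj_in_V[OF g assms(4)] unfolding child_def by auto
  moreover have "\<not> dist V E r u \<le> dist V E r x"
  proof
    assume "dist V E r u \<le> dist V E r x"
    moreover have "dist V E r v \<le> dist V E r x" "adj E x v"
      using parent adj_commute[of E x v] unfolding child_def by auto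
    ultimately show False using tree_lower_neighbour_unique[OF t r assms(4)] assms(5) by blast
  qed
  ultimately show ?thesis
    using dist_adj_le[OF t r x assms(4)] assms(4) unfolding child_def by auto
qed

lemma tree_no_isolated:
  assumes t: "tree V E" and "u \<in> V" "w \<in> V" "u \<noteq> w"
  shows "no_isolated V E"
  unfolding no_isolated_def
proof
  fix y assume y: "y \<in> V"
  obtain z where z: "z \<in> V" "z \<noteq> y" using assms by metis
  then obtain P where P: "walk V E P" "hd P = y" "last P = z"
    using t y unfolding tree_def connected_graph_def by blast
  obtain P' where P': "P = y # P'" using P walk_def by (cases P) auto
  with P z have "P' \<noteq> []" by auto
  with P P' have "adj E y (hd P')" "hd P' \<in> V"
    unfolding walk_iff_successively by (auto simp: successively_Cons)
  then show "\<exists>u\<in>V. adj E y u" by blast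
qed

section \<open>Total Roman dominating functions\<close>

lemma gamma_tR_le: "TRDF V E f \<Longrightarrow> gamma_tR V E \<le> sum f V"
  unfolding gamma_tR_def by (rule Least_le) blast

lemma gamma_tR_attained:
  assumes "no_isolated V E"
  shows "\<exists>f. TRDF V E f \<and> gamma_tR V E = sum f V"
proof -
  have "TRDF V E (\<lambda>_. 1)" using assms unfolding TRDF_def no_isolated_def by auto
  then have "\<exists>w f. TRDF V E f \<and> w = sum f V" by blast
  from LeastI_ex[OF this] show ?thesis unfolding gamma_tR_def by blast
qed

lemma TRDF_pendant:
  assumes h: "TRDF V E h" and "y \<in> V" and only_x: "\<And>u. adj E y u \<Longrightarrow> u = x"
  shows "0 < h x \<and> 2 \<le> h x + h y"
proof (cases "h y = 0")
  case True
  with h \<open>y \<in> V\<close> obtain u where "adj E y u" "h u = 2" unfolding TRDF_def by blast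
  with only_x True show ?thesis by auto
next
  case False
  with h \<open>y \<in> V\<close> obtain u where "adj E y u" "0 < h u" unfolding TRDF_def by blast
  with only_x False show ?thesis by auto
qed

lemma TRDF_leaf_star:
  assumes g: "graph V E" and h: "TRDF V E' h" and sub: "\<And>p q. adj E' p q \<Longrightarrow> adj E p q"
    and "c \<in> V" and leaves: "\<And>u. adj E' c u \<Longrightarrow> leaf V E u"
    and l: "adj E' c l1" "adj E' c l2" "l1 \<noteq> l2"
  obtains m1 m2 where "adj E' c m1" "adj E' c m2" "m1 \<noteq> m2" "3 \<le> h c + h m1 + h m2"
    and "\<And>u. adj E' m1 u \<Longrightarrow> u = c" "\<And>u. adj E' m2 u \<Longrightarrow> u = c"
proof -
  have pendant: "u = c" if "adj E' c l" "adj E' l u" for l u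
    using leaf_only_neighbour[OF g sub leaves[OF that(1)] sub[OF that(1)] that(2)] .
  show ?thesis
  proof (cases "h c = 2")
    case True
    with h \<open>c \<in> V\<close> obtain u where u: "adj E' c u" "0 < h u" unfolding TRDF_def by fastforce
    show ?thesis
    proof (cases "u = l1")
      case True
      with u l \<open>h c = 2\<close> show ?thesis by (intro that[OF u(1) l(2)]) (auto intro: pendant)
    next
      case False
      with u l \<open>h c = 2\<close> show ?thesis by (intro that[OF u(1) l(1)]) (auto intro: pendant)
    qed
  next
    case False
    have "l1 \<in> V" "l2 \<in> V" using adj_in_V[OF g sub[OF l(1)]] adj_in_V[OF g sub[OF l(2)]] by auto
    then have "2 \<le> h c + h l1" "2 \<le> h c + h l2"
      using TRDF_pendant[OF h _ pendant[OF l(1)]] TRDF_pendant[OF h _ pendant[OF l(2)]] by auto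
    moreover have "h c \<le> 2" using h \<open>c \<in> V\<close> unfolding TRDF_def by blast
    ultimately show ?thesis using False pendant l by (intro that[OF l]) auto
  qed
qed

definition reassign :: "'a set \<Rightarrow> 'a set \<Rightarrow> ('a \<Rightarrow> nat) \<Rightarrow> 'a \<Rightarrow> nat" where
  "reassign H Z h w = (if w \<in> H then 2 else if w \<in> Z then 0 else h w)"

lemma TRDF_reassign:
  assumes h: "TRDF V E' h" and sub: "\<And>a b. adj E' a b \<Longrightarrow> adj E a b" and "H \<subseteq> V"
    and Z_hub: "\<And>z. z \<in> Z \<Longrightarrow> \<exists>c\<in>H. adj E z c"
    and H_support: "\<And>c. c \<in> H \<Longrightarrow> \<exists>u\<in>V. adj E c u \<and> 0 < reassign H Z h u"
    and Z_pendant: "\<And>z u. z \<in> Z \<Longrightarrow> adj E' z u \<Longrightarrow> u \<in> H"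
  shows "TRDF V E (reassign H Z h)"
proof -
  let ?g = "reassign H Z h"
  have h_le: "h u \<le> 2" if "u \<in> V" for u using h that unfolding TRDF_def by blast
  have g_le: "?g u \<le> 2" if "u \<in> V" for u using h_le[OF that] unfolding reassign_def by auto
  have raised: "h u \<le> ?g u" if "adj E' w u" "u \<in> V" "w \<notin> H" for w u
    using Z_pendant[of u w] adj_commute[of E' w u] that h_le[OF that(2)] unfolding reassign_def by auto
  have zero: "\<exists>u\<in>V. adj E w u \<and> ?g u = 2" if "w \<in> V" "?g w = 0" for w
  proof (cases "w \<in> Z")
    case True
    with Z_hub \<open>H \<subseteq> V\<close> show ?thesis unfolding reassign_def by fastforce
  next
    case False
    with that have "w \<notin> H" "h w = 0" unfolding reassign_def by (auto split: if_splits)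
    with h \<open>w \<in> V\<close> obtain u where u: "u \<in> V" "adj E' w u" "h u = 2" unfolding TRDF_def by blast
    with raised[of w u] g_le[of u] \<open>w \<notin> H\<close> have "?g u = 2" by simp
    with u sub show ?thesis by blast
  qed
  have positive: "\<exists>u\<in>V. adj E w u \<and> 0 < ?g u" if "w \<in> V" "0 < ?g w" for w
  proof (cases "w \<in> H")
    case True
    then show ?thesis by (rule H_support)
  next
    case False
    with that have "0 < h w" unfolding reassign_def by (auto split: if_splits)
    with h \<open>w \<in> V\<close> obtain u where "u \<in> V" "adj E' w u" "0 < h u" unfolding TRDF_def by blast
    with raised[of w u] False sub show ?thesis by fastforce
  qed
  from g_le zero positive show ?thesis unfolding TRDF_def by blast
qed

lemma sum_reassign_less:
  assumes "finite V" "H \<union> Z \<subseteq> V" "H \<inter> Z = {}" and less: "2 * card H < sum h (H \<union> Z)"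
  shows "sum (reassign H Z h) V < sum h V"
proof -
  let ?g = "reassign H Z h" and ?D = "H \<union> Z"
  have fin: "finite H" "finite Z" using assms(1,2) finite_subset by blast+
  have split: "sum f V = sum f (V - ?D) + sum f ?D" for f :: "'a \<Rightarrow> nat"
    using assms(1,2) by (metis sum.subset_diff)
  have "sum ?g (V - ?D) = sum h (V - ?D)" by (rule sum.cong) (auto simp: reassign_def)
  moreover have "sum ?g ?D = 2 * card H"
    using fin assms(3) by (auto simp: sum.union_disjoint reassign_def)
  ultimately show ?thesis using split[of ?g] split[of h] less by linarith
qed

lemma reassign_improves:
  assumes fin: "finite V" and h: "TRDF V E' h" and sub: "\<And>a b. adj E' a b \<Longrightarrow> adj E a b"
    and HZ: "H \<union> Z \<subseteq> V" and disj: "H \<inter> Z = {}"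
    and Z_hub: "\<And>z. z \<in> Z \<Longrightarrow> \<exists>c\<in>H. adj E z c"
    and H_support: "\<And>c. c \<in> H \<Longrightarrow> \<exists>u\<in>V. adj E c u \<and> 0 < reassign H Z h u"
    and Z_pendant: "\<And>z u. z \<in> Z \<Longrightarrow> adj E' z u \<Longrightarrow> u \<in> H"
    and less: "2 * card H < sum h (H \<union> Z)"
  shows "\<exists>g. TRDF V E g \<and> sum g V < sum h V"
proof -
  have "H \<subseteq> V" using HZ by blast
  have "TRDF V E (reassign H Z h)"
    by (rule TRDF_reassign[OF h]) (use sub \<open>H \<subseteq> V\<close> Z_hub H_support Z_pendant in blast)+
  moreover have "sum (reassign H Z h) V < sum h V" using sum_reassign_less[OF fin HZ disj less] .
  ultimately show ?thesis by blast
qed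

lemma bad_setI:
  assumes "F \<subseteq> E" and no_iso: "no_isolated V (E - F)"
    and improve: "\<And>h. TRDF V (E - F) h \<Longrightarrow> \<exists>g. TRDF V E g \<and> sum g V < sum h V"
  shows "bad_set V E F"
proof -
  obtain h where h: "TRDF V (E - F) h" "gamma_tR V (E - F) = sum h V"
    using gamma_tR_attained[OF no_iso] by blast
  obtain g where "TRDF V E g" "sum g V < sum h V" using improve[OF h(1)] by blast
  then have "gamma_tR V E < gamma_tR V (E - F)" using gamma_tR_le h(2) by (metis le_less_trans)
  then show ?thesis unfolding bad_set_def using assms(1,2) by blast
qed

lemma no_isolated_Diff:
  assumes "no_isolated V E"
    and "\<And>w u. w \<in> V \<Longrightarrow> adj E w u \<Longrightarrow> {w, u} \<in> F \<Longrightarrow> \<exists>u'\<in>V. adj E w u' \<and> {w, u'} \<notin> F"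
  shows "no_isolated V (E - F)"
  using assms unfolding no_isolated_def adj_Diff by metis

lemma no_isolated_Diff_keeps_pendant:
  assumes "no_isolated V (E - F)" "y \<in> V" "\<And>u. adj E y u \<Longrightarrow> u = x"
  shows "{y, x} \<notin> F"
  using assms unfolding no_isolated_def adj_Diff by metis

lemma b_tR_le_card: "bad_set V E F \<Longrightarrow> b_tR V E \<le> enat (card F)"
  unfolding b_tR_def by (auto intro: Least_le)

lemma b_tR_eq_1:
  assumes g: "graph V E" and bad: "bad_set V E {e}"
  shows "b_tR V E = 1"
proof -
  have "card F \<noteq> 0" if "bad_set V E F" for F
  proof -
    have "finite F" using that finite_edges[OF g] unfolding bad_set_def by (auto intro: finite_subset)
    moreover have "F \<noteq> {}" using that unfolding bad_set_def by auto
    ultimately show ?thesis by simp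
  qed
  then have "(LEAST k. \<exists>F. bad_set V E F \<and> card F = k) = 1"
    using bad by (intro Least_equality) (auto, fastforce)
  then show ?thesis using bad unfolding b_tR_def by (auto simp: one_enat_def)
qed

section \<open>Edge sets whose deletion raises the total Roman domination number\<close>

lemma adj_Diff_edge:
  "adj (E - {{v, x}}) p q \<longleftrightarrow> adj E p q \<and> \<not> (p = v \<and> q = x) \<and> \<not> (p = x \<and> q = v)"
  by (auto simp: adj_Diff doubleton_eq_iff)

lemma no_isolated_Diff_parent_edge:
  assumes g: "graph V E" and "no_isolated V E" and "adj E v a" "a \<noteq> x" "adj E x l" "l \<noteq> v"
  shows "no_isolated V (E - {{v, x}})"
  using assms(2) unfolding no_isolated_def adj_Diff_edge
  by (metis assms(3-6) adj_in_V[OF g])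

lemma parent_edge_TRDF_improvable:
  assumes g: "graph V E" and vx: "adj E v x" and va: "adj E v a" and a: "leaf V E a" "a \<noteq> x"
    and l: "adj E x l1" "adj E x l2" "l1 \<noteq> l2" "l1 \<noteq> v" "l2 \<noteq> v"
    and children: "\<And>u. adj E x u \<Longrightarrow> u \<noteq> v \<Longrightarrow> leaf V E u"
    and h: "TRDF V (E - {{v, x}}) h"
  shows "\<exists>g. TRDF V E g \<and> sum g V < sum h V"
proof -
  let ?E' = "E - {{v, x}}"
  have sub: "adj E p q" if "adj ?E' p q" for p q using that by (simp add: adj_Diff)
  have xV: "x \<in> V" and aV: "a \<in> V" using adj_in_V[OF g] vx va by auto
  have leaves: "leaf V E u" if "adj ?E' x u" for u using that children by (auto simp: adj_Diff_edge)
  have "adj ?E' x l1" "adj ?E' x l2" using l by (auto simp: adj_Diff_edge)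
  then obtain m1 m2 where m: "adj ?E' x m1" "adj ?E' x m2" "m1 \<noteq> m2" "3 \<le> h x + h m1 + h m2"
    and m_pendant: "\<And>u. adj ?E' m1 u \<Longrightarrow> u = x" "\<And>u. adj ?E' m2 u \<Longrightarrow> u = x"
    using TRDF_leaf_star[OF g h sub xV leaves _ _ l(3)] by blast
  have "u = v" if "adj ?E' a u" for u using leaf_only_neighbour[OF g sub a(1) va that] .
  then have "0 < h v" using TRDF_pendant[OF h aV] by blast
  have neq: "x \<noteq> m1" "x \<noteq> m2" "v \<noteq> m1" "v \<noteq> m2"
    using m unfolding adj_Diff_edge by (auto simp: adj_def)
  show ?thesis
  proof (rule reassign_improves[OF _ h sub])
    show "finite V" using g unfolding graph_def by blast
    show "{x} \<union> {m1, m2} \<subseteq> V" using xV m adj_in_V[OF g] sub by blast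
    show "\<exists>c\<in>{x}. adj E z c" if "z \<in> {m1, m2}" for z
      using that m sub adj_commute[of E z x] by auto
    have "reassign {x} {m1, m2} h v = h v" using vx neq unfolding reassign_def adj_def by auto
    then show "\<exists>u\<in>V. adj E c u \<and> 0 < reassign {x} {m1, m2} h u" if "c \<in> {x}" for c
      using that adj_in_V[OF g vx] \<open>0 < h v\<close> adj_commute[of E v x] vx by auto
  qed (use neq m m_pendant in auto)
qed

lemma bad_set_parent_edge:
  assumes g: "graph V E" and "no_isolated V E"
    and "adj E v x" "adj E v a" "leaf V E a" "a \<noteq> x"
    and "adj E x l1" "adj E x l2" "l1 \<noteq> l2" "l1 \<noteq> v" "l2 \<noteq> v"
    and "\<And>u. adj E x u \<Longrightarrow> u \<noteq> v \<Longrightarrow> leaf V E u"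
  shows "bad_set V E {{v, x}}"
proof (rule bad_setI)
  show "{{v, x}} \<subseteq> E" using assms(3) unfolding adj_def by auto
  show "no_isolated V (E - {{v, x}})"
    using no_isolated_Diff_parent_edge[OF g assms(2,4,6,7,10)] .
qed (rule parent_edge_TRDF_improvable[OF assms(1,3-)])

definition nonleaf_edges :: "'a set \<Rightarrow> 'a set set \<Rightarrow> 'a \<Rightarrow> 'a set set" where
  "nonleaf_edges V E v = {{v, w} | w. w \<in> nbrs V E v \<and> \<not> leaf V E w}"

lemma mem_nonleaf_edges:
  assumes "graph V E" "adj E p q"
  shows "{p, q} \<in> nonleaf_edges V E v \<longleftrightarrow> p = v \<and> \<not> leaf V E q \<or> q = v \<and> \<not> leaf V E p"
  using assms(2) adj_in_V[OF assms] adj_commute[of E p q] unfolding nonleaf_edges_def nbrs_def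
  by (auto simp: doubleton_eq_iff)

lemma adj_Diff_nonleaf_edges:
  assumes "graph V E"
  shows "adj (E - nonleaf_edges V E v) p q \<longleftrightarrow>
    adj E p q \<and> \<not> (p = v \<and> \<not> leaf V E q) \<and> \<not> (q = v \<and> \<not> leaf V E p)"
  using mem_nonleaf_edges[OF assms, of p q v] by (auto simp: adj_Diff)

lemma no_isolated_Diff_nonleaf_edges:
  assumes g: "graph V E" and no_iso: "no_isolated V E" and "adj E v l" "leaf V E l"
  shows "no_isolated V (E - nonleaf_edges V E v)"
proof (rule no_isolated_Diff[OF no_iso])
  fix w u assume w: "w \<in> V" "adj E w u" "{w, u} \<in> nonleaf_edges V E v"
  show "\<exists>u'\<in>V. adj E w u' \<and> {w, u'} \<notin> nonleaf_edges V E v"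
  proof (cases "w = v")
    case True
    have "v \<noteq> l" using assms(3) unfolding adj_def by auto
    with True assms(3,4) adj_in_V[OF g assms(3)] show ?thesis by (auto simp: mem_nonleaf_edges[OF g])
  next
    case False
    then have "\<not> leaf V E w" "adj E w v" using w mem_nonleaf_edges[OF g] by auto
    then obtain u' where "u' \<in> V" "adj E w u'" "u' \<noteq> v"
      using nonleaf_other_neighbour[OF g w(1)] by blast
    with False show ?thesis by (auto simp: mem_nonleaf_edges[OF g])
  qed
qed

lemma nonleaf_edges_TRDF_improvable:
  assumes g: "graph V E" and vx: "adj E v x" and xy: "adj E x y" and y: "leaf V E y" "y \<noteq> v"
    and x: "\<not> leaf V E x" and l: "adj E v l1" "adj E v l2" "leaf V E l1" "leaf V E l2" "l1 \<noteq> l2"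
    and h: "TRDF V (E - nonleaf_edges V E v) h"
  shows "\<exists>g. TRDF V E g \<and> sum g V < sum h V"
proof -
  let ?E' = "E - nonleaf_edges V E v"
  have sub: "adj E p q" if "adj ?E' p q" for p q using that by (simp add: adj_Diff)
  have vV: "v \<in> V" and xV: "x \<in> V" and yV: "y \<in> V" using adj_in_V[OF g] vx xy by auto
  have leaves: "leaf V E u" if "adj ?E' v u" for u using that by (auto simp: adj_Diff_nonleaf_edges[OF g])
  have "adj ?E' v l1" "adj ?E' v l2" using l by (auto simp: adj_Diff_nonleaf_edges[OF g])
  then obtain m1 m2 where m: "adj ?E' v m1" "adj ?E' v m2" "m1 \<noteq> m2" "3 \<le> h v + h m1 + h m2"
    and m_pendant: "\<And>u. adj ?E' m1 u \<Longrightarrow> u = v" "\<And>u. adj ?E' m2 u \<Longrightarrow> u = v"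
    using TRDF_leaf_star[OF g h sub vV leaves _ _ l(5)] by blast
  have y_pendant: "u = x" if "adj ?E' y u" for u
    using leaf_only_neighbour[OF g sub y(1) xy that] .
  then have "2 \<le> h x + h y" using TRDF_pendant[OF h yV] by blast
  have "v \<noteq> x" "x \<noteq> y" using vx xy unfolding adj_def by auto
  moreover have "y \<noteq> m1" "y \<noteq> m2"
    using y_pendant m(1,2) \<open>v \<noteq> x\<close> adj_commute[of ?E' v m1] adj_commute[of ?E' v m2] by auto
  moreover have "v \<noteq> m1" "v \<noteq> m2" "x \<noteq> m1" "x \<noteq> m2" using m x leaves unfolding adj_def by auto
  ultimately have neq: "v \<noteq> x" "v \<noteq> y" "x \<noteq> y" "v \<noteq> m1" "v \<noteq> m2" "x \<noteq> m1" "x \<noteq> m2"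
    "y \<noteq> m1" "y \<noteq> m2" "m1 \<noteq> m2"
    using y(2) m(3) by auto
  show ?thesis
  proof (rule reassign_improves[OF _ h sub])
    show "finite V" using g unfolding graph_def by blast
    show "{v, x} \<union> {m1, m2, y} \<subseteq> V" using vV xV yV m adj_in_V[OF g] sub by blast
    show "\<exists>c\<in>{v, x}. adj E z c" if "z \<in> {m1, m2, y}" for z
      using that m sub xy adj_commute[of E v z] adj_commute[of E x y] by auto
    show "\<exists>u\<in>V. adj E c u \<and> 0 < reassign {v, x} {m1, m2, y} h u" if "c \<in> {v, x}" for c
      using that vx vV xV adj_commute[of E v x] unfolding reassign_def by auto
    show "u \<in> {v, x}" if "z \<in> {m1, m2, y}" "adj ?E' z u" for z u
      using that m_pendant y_pendant by auto
    show "2 * card {v, x} < sum h ({v, x} \<union> {m1, m2, y})"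
      using neq m(4) \<open>2 \<le> h x + h y\<close> by simp
  qed (use neq in auto)
qed

lemma bad_set_nonleaf_edges:
  assumes g: "graph V E" and "no_isolated V E"
    and "adj E v x" "adj E x y" "leaf V E y" "y \<noteq> v" "\<not> leaf V E x"
    and "adj E v l1" "adj E v l2" "leaf V E l1" "leaf V E l2" "l1 \<noteq> l2"
  shows "bad_set V E (nonleaf_edges V E v)"
proof (rule bad_setI)
  show "nonleaf_edges V E v \<subseteq> E" unfolding nonleaf_edges_def nbrs_def adj_def by auto
  show "no_isolated V (E - nonleaf_edges V E v)"
    using no_isolated_Diff_nonleaf_edges[OF g assms(2,8,10)] .
qed (rule nonleaf_edges_TRDF_improvable[OF assms(1,3-)])

lemma card_ge_2_obtain:
  assumes "2 \<le> card A"
  obtains a b where "a \<in> A" "b \<in> A" "a \<noteq> b"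
proof -
  have "finite A" using assms by (metis card.infinite not_numeral_le_zero)
  with assms have "\<not> (\<forall>a\<in>A. \<forall>b\<in>A. a = b)" by (simp add: card_le_Suc0_iff_eq[symmetric])
  with that show ?thesis by blast
qed

lemma leaf_neighbour_exists:
  assumes "1 \<le> card {u \<in> nbrs V E v. leaf V E u}"
  obtains a where "adj E v a" "leaf V E a"
proof -
  have "{u \<in> nbrs V E v. leaf V E u} \<noteq> {}" using assms by (metis card.empty not_one_le_zero)
  with that show ?thesis unfolding nbrs_def by blast
qed

lemma two_leaf_neighbours_exist:
  assumes "2 \<le> card {u \<in> nbrs V E v. leaf V E u}"
  obtains l1 l2 where "adj E v l1" "adj E v l2" "leaf V E l1" "leaf V E l2" "l1 \<noteq> l2"
  using card_ge_2_obtain[OF assms] that unfolding nbrs_def by blast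

lemma tree_b_tR_eq_1:
  assumes t: "tree V E" and r: "r \<in> V" and parent: "child V E r v x"
    and children: "\<And>y. child V E r x y \<Longrightarrow> leaf V E y"
    and "1 \<le> card {u \<in> nbrs V E v. leaf V E u}" and "2 \<le> card {u \<in> nbrs V E x. leaf V E u}"
  shows "b_tR V E = 1"
proof -
  have g: "graph V E" using t unfolding tree_def by auto
  have vx: "adj E v x" and "v \<in> V" "x \<in> V" using parent unfolding child_def by auto
  obtain a where a: "adj E v a" "leaf V E a" using leaf_neighbour_exists[OF assms(5)] .
  obtain l1 l2 where l: "adj E x l1" "adj E x l2" "leaf V E l1" "leaf V E l2" "l1 \<noteq> l2"
    using two_leaf_neighbours_exist[OF assms(6)] .
  have "\<not> leaf V E x" using leaf_adj_unique[OF g _ l(1,2)] l(5) by blast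
  with a have "a \<noteq> x" by blast
  then have "\<not> leaf V E v" using leaf_adj_unique[OF g _ a(1) vx] by blast
  with l have "l1 \<noteq> v" "l2 \<noteq> v" by auto
  have "leaf V E u" if "adj E x u" "u \<noteq> v" for u
    using child_if_adj_not_parent[OF t r parent that] children by blast
  then have "bad_set V E {{v, x}}"
    using bad_set_parent_edge[OF g _ vx a \<open>a \<noteq> x\<close> l(1,2,5) \<open>l1 \<noteq> v\<close> \<open>l2 \<noteq> v\<close>]
      tree_no_isolated[OF t \<open>v \<in> V\<close> \<open>x \<in> V\<close>] vx unfolding adj_def by blast
  then show ?thesis by (rule b_tR_eq_1[OF g])
qed

lemma tree_b_tR_le:
  assumes t: "tree V E" and parent: "child V E r v x" and child: "child V E r x y"
    and children: "\<And>y. child V E r x y \<Longrightarrow> leaf V E y"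
    and "2 \<le> card {u \<in> nbrs V E v. leaf V E u}"
  shows "b_tR V E \<le> enat (deg V E v - card {u \<in> nbrs V E v. leaf V E u})"
proof -
  let ?L = "{u \<in> nbrs V E v. leaf V E u}"
  let ?F = "nonleaf_edges V E v"
  have g: "graph V E" using t unfolding tree_def by auto
  have vx: "adj E v x" and "v \<in> V" "x \<in> V" using parent unfolding child_def by auto
  have xy: "adj E x y" and y: "leaf V E y" "y \<noteq> v"
    using parent child children unfolding child_def by auto
  obtain l1 l2 where l: "adj E v l1" "adj E v l2" "leaf V E l1" "leaf V E l2" "l1 \<noteq> l2"
    using two_leaf_neighbours_exist[OF assms(5)] .
  have "\<not> leaf V E x" using leaf_adj_unique[OF g _ xy] vx y(2) adj_commute[of E v x] by blast
  then have bad: "bad_set V E ?F"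
    using bad_set_nonleaf_edges[OF g _ vx xy y _ l] tree_no_isolated[OF t \<open>v \<in> V\<close> \<open>x \<in> V\<close>] vx
    unfolding adj_def by blast
  have "?F = (\<lambda>w. {v, w}) ` (nbrs V E v - ?L)" unfolding nonleaf_edges_def by auto
  then have "card ?F \<le> card (nbrs V E v - ?L)" by (simp add: card_image_le finite_nbrs[OF g])
  also have "\<dots> = deg V E v - card ?L"
    unfolding deg_def by (rule card_Diff_subset) (auto intro: finite_subset finite_nbrs[OF g])
  finally have "enat (card ?F) \<le> enat (deg V E v - card ?L)" by simp
  with b_tR_le_card[OF bad] show ?thesis by (rule order_trans)
qed

section \<open>Wounded spiders\<close>

(* The short legs are the k unsubdivided edges {0, l} with t - k < l <= t; the long legs are the
   paths 0 - (t + i) - i with 1 <= i <= t - k, whose middle vertices t + i subdivide the edges {0, i}. *)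

lemma spider_adj:
  "adj (spider_E k t) a b \<longleftrightarrow>
     a = 0 \<and> (t - k < b \<and> b \<le> t \<or> t < b \<and> b \<le> t + (t - k))
   \<or> b = 0 \<and> (t - k < a \<and> a \<le> t \<or> t < a \<and> a \<le> t + (t - k))
   \<or> 1 \<le> b \<and> b \<le> t - k \<and> a = t + b \<or> 1 \<le> a \<and> a \<le> t - k \<and> b = t + a"
  unfolding adj_def spider_E_def
  by (auto simp: doubleton_eq_iff intro: exI[of _ "b - t"] exI[of _ "a - t"])

lemma spider_adj_centre: "adj (spider_E k t) 0 u \<longleftrightarrow> t - k < u \<and> u \<le> t \<or> t < u \<and> u \<le> t + (t - k)"
  unfolding spider_adj by auto

lemma spider_adj_short_leg:
  "t - k < l \<Longrightarrow> l \<le> t \<Longrightarrow> adj (spider_E k t) l u \<longleftrightarrow> u = 0"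
  unfolding spider_adj by auto

lemma spider_adj_long_leg_end:
  "1 \<le> i \<Longrightarrow> i \<le> t - k \<Longrightarrow> adj (spider_E k t) i u \<longleftrightarrow> u = t + i"
  unfolding spider_adj by auto

lemma spider_adj_long_leg_mid:
  "1 \<le> i \<Longrightarrow> i \<le> t - k \<Longrightarrow> adj (spider_E k t) (t + i) u \<longleftrightarrow> u = 0 \<or> u = i"
  unfolding spider_adj by auto

lemma spider_V_iff: "u \<in> spider_V k t \<longleftrightarrow> u \<le> t + (t - k)"
  unfolding spider_V_def by auto

lemma spider_graph: "graph (spider_V k t) (spider_E k t)"
  unfolding graph_def
proof (intro conjI ballI)
  show "finite (spider_V k t)" unfolding spider_V_def by simp
  fix e assume "e \<in> spider_E k t"
  then consider
      (short) i where "e = {0, i}" "t - k < i" "i \<le> t"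
    | (mid) i where "e = {0, t + i}" "1 \<le> i" "i \<le> t - k"
    | (long) i where "e = {t + i, i}" "1 \<le> i" "i \<le> t - k"
    unfolding spider_E_def by blast
  then show "\<exists>u v. e = {u, v} \<and> u \<noteq> v \<and> u \<in> spider_V k t \<and> v \<in> spider_V k t"
  proof cases
    case short
    then show ?thesis by (intro exI[of _ 0] exI[of _ i]) (auto simp: spider_V_iff)
  next
    case mid
    then show ?thesis by (intro exI[of _ 0] exI[of _ "t + i"]) (auto simp: spider_V_iff)
  next
    case long
    then show ?thesis by (intro exI[of _ "t + i"] exI[of _ i]) (auto simp: spider_V_iff)
  qed
qed

lemma spider_leaf_short_leg:
  assumes "t - k < l" "l \<le> t"
  shows "leaf (spider_V k t) (spider_E k t) l"
proof -
  have "nbrs (spider_V k t) (spider_E k t) l = {0}"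
    unfolding nbrs_def spider_adj_short_leg[OF assms] spider_V_iff by auto
  with assms show ?thesis unfolding leaf_def deg_def spider_V_iff by simp
qed

lemma spider_leaf_long_leg_end:
  assumes "1 \<le> i" "i \<le> t - k"
  shows "leaf (spider_V k t) (spider_E k t) i"
proof -
  have "nbrs (spider_V k t) (spider_E k t) i = {t + i}"
    unfolding nbrs_def spider_adj_long_leg_end[OF assms] spider_V_iff using assms by auto
  with assms show ?thesis unfolding leaf_def deg_def spider_V_iff by simp
qed

lemma spider_not_leaf_long_leg_mid:
  assumes "1 \<le> i" "i \<le> t - k"
  shows "\<not> leaf (spider_V k t) (spider_E k t) (t + i)"
proof -
  have "nbrs (spider_V k t) (spider_E k t) (t + i) = {0, i}"
    unfolding nbrs_def spider_adj_long_leg_mid[OF assms] spider_V_iff using assms by auto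
  with assms show ?thesis unfolding leaf_def deg_def by simp
qed

definition spider_mid_edges :: "nat \<Rightarrow> nat \<Rightarrow> nat set set" where
  "spider_mid_edges k t = (\<lambda>w. {0, w}) ` {t + 1 .. t + (t - k)}"

lemma mem_spider_mid_edges:
  "{p, q} \<in> spider_mid_edges k t \<longleftrightarrow>
     p = 0 \<and> t < q \<and> q \<le> t + (t - k) \<or> q = 0 \<and> t < p \<and> p \<le> t + (t - k)"
  unfolding spider_mid_edges_def by (auto simp: doubleton_eq_iff)

lemma card_spider_mid_edges: "card (spider_mid_edges k t) = t - k"
proof -
  have "inj_on (\<lambda>w. {0::nat, w}) {t + 1 .. t + (t - k)}"
    by (rule inj_onI) (auto simp: doubleton_eq_iff)
  then show ?thesis unfolding spider_mid_edges_def by (simp add: card_image)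
qed

lemma spider_nonleaf_centre_edges:
  "nonleaf_edges (spider_V k t) (spider_E k t) 0 = spider_mid_edges k t"
proof -
  have "w \<in> nbrs (spider_V k t) (spider_E k t) 0 \<and> \<not> leaf (spider_V k t) (spider_E k t) w
      \<longleftrightarrow> w \<in> {t + 1 .. t + (t - k)}" for w
  proof
    assume "w \<in> nbrs (spider_V k t) (spider_E k t) 0 \<and> \<not> leaf (spider_V k t) (spider_E k t) w"
    then show "w \<in> {t + 1 .. t + (t - k)}"
      using spider_leaf_short_leg[where k = k and t = t and l = w] unfolding nbrs_def spider_adj_centre by auto
  next
    assume w: "w \<in> {t + 1 .. t + (t - k)}"
    then have "\<not> leaf (spider_V k t) (spider_E k t) (t + (w - t))"
      by (intro spider_not_leaf_long_leg_mid) auto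
    with w show "w \<in> nbrs (spider_V k t) (spider_E k t) 0 \<and> \<not> leaf (spider_V k t) (spider_E k t) w"
      unfolding nbrs_def spider_adj_centre spider_V_iff by auto
  qed
  then show ?thesis unfolding spider_mid_edges_def nonleaf_edges_def by blast
qed

definition spider_weight :: "nat \<Rightarrow> nat \<Rightarrow> nat \<Rightarrow> nat" where
  "spider_weight k t u = (if u = 0 then 2 else if t - k < u \<and> u \<le> t then 0 else 1)"

context
  fixes k t :: nat
  assumes two_le_k: "2 \<le> k" and k_less_t: "k < t"
begin

lemma spider_no_isolated: "no_isolated (spider_V k t) (spider_E k t)"
  unfolding no_isolated_def
proof
  fix w assume "w \<in> spider_V k t"
  define u where "u = (if w = 0 then t else if w \<le> t - k then t + w else 0)"
  have "adj (spider_E k t) w u"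
    using \<open>w \<in> spider_V k t\<close> two_le_k k_less_t unfolding u_def spider_adj spider_V_iff by auto
  moreover have "u \<in> spider_V k t" unfolding u_def spider_V_iff by auto
  ultimately show "\<exists>u\<in>spider_V k t. adj (spider_E k t) w u" by blast
qed

lemma sum_spider_V:
  "sum g (spider_V k t) = g 0 + sum g {1..t - k} + sum g {t - k + 1..t} + (\<Sum>i=1..t - k. g (t + i))"
proof -
  have "sum g {0..t + (t - k)} = sum g {0..t} + sum g {t + 1..t + (t - k)}"
    by (rule sum.ub_add_nat) simp
  moreover have "sum g {0..(t - k) + k} = sum g {0..t - k} + sum g {t - k + 1..(t - k) + k}"
    by (rule sum.ub_add_nat) simp
  moreover have "sum g {0..t - k} = g 0 + sum g {1..t - k}"
    by (simp add: sum.atLeast_Suc_atMost)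
  moreover have "sum g {t + 1..t + (t - k)} = (\<Sum>i=1..t - k. g (t + i))"
    using sum.shift_bounds_cl_nat_ivl[of g 1 t "t - k"] by (simp add: add.commute)
  ultimately show ?thesis unfolding spider_V_def using k_less_t by simp
qed

lemma spider_TRDF_weight_ge:
  assumes g: "TRDF (spider_V k t) (spider_E k t) g"
  shows "2 + 2 * (t - k) \<le> sum g (spider_V k t)"
proof -
  have "2 \<le> g (t + i) + g i" if "i \<in> {1..t - k}" for i
    using TRDF_pendant[OF g, of i "t + i"] spider_adj_long_leg_end[where i = i and k = k and t = t] that
    by (auto simp: spider_V_iff)
  then have "(\<Sum>i=1..t - k. 2) \<le> (\<Sum>i=1..t - k. g (t + i) + g i)" by (rule sum_mono)
  then have "2 * (t - k) \<le> sum g {1..t - k} + (\<Sum>i=1..t - k. g (t + i))"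
    by (simp add: sum.distrib)
  moreover have "2 \<le> g 0 + g t"
    using TRDF_pendant[OF g, of t 0] spider_adj_short_leg[where k = k and t = t and l = t] two_le_k k_less_t
    by (auto simp: spider_V_iff)
  moreover have "g t \<le> sum g {t - k + 1..t}" by (rule member_le_sum) (use two_le_k k_less_t in auto)
  ultimately show ?thesis unfolding sum_spider_V by linarith
qed

lemma bad_set_spider_mid_edges: "bad_set (spider_V k t) (spider_E k t) (spider_mid_edges k t)"
proof -
  have "1 \<le> t - k" "t - k < t - 1" using two_le_k k_less_t by auto
  then have adj: "adj (spider_E k t) 0 (t + 1)" "adj (spider_E k t) (t + 1) 1"
    "adj (spider_E k t) 0 t" "adj (spider_E k t) 0 (t - 1)"
    and leaf: "leaf (spider_V k t) (spider_E k t) 1" "leaf (spider_V k t) (spider_E k t) t"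
    "leaf (spider_V k t) (spider_E k t) (t - 1)"
    and "\<not> leaf (spider_V k t) (spider_E k t) (t + 1)"
    using spider_leaf_long_leg_end[where i = 1 and k = k and t = t]
      spider_not_leaf_long_leg_mid[where i = 1 and k = k and t = t]
      spider_leaf_short_leg[where k = k and t = t and l = t]
      spider_leaf_short_leg[where k = k and t = t and l = "t - 1"]
    by (auto simp: spider_adj)
  moreover have "t \<noteq> t - 1" using k_less_t by auto
  ultimately show ?thesis
    using bad_set_nonleaf_edges[OF spider_graph spider_no_isolated adj(1,2) leaf(1) _ _ adj(3,4) leaf(2,3)]
    unfolding spider_nonleaf_centre_edges by simp
qed

lemma spider_bad_set_subset:
  assumes "bad_set (spider_V k t) (spider_E k t) E'"
  shows "E' \<subseteq> spider_mid_edges k t"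
proof
  fix e assume "e \<in> E'"
  have no_iso: "no_isolated (spider_V k t) (spider_E k t - E')" and "E' \<subseteq> spider_E k t"
    using assms unfolding bad_set_def by auto
  with \<open>e \<in> E'\<close> consider
      (short) i where "e = {0, i}" "t - k < i" "i \<le> t"
    | (mid) i where "e = {0, t + i}" "1 \<le> i" "i \<le> t - k"
    | (long) i where "e = {t + i, i}" "1 \<le> i" "i \<le> t - k"
    unfolding spider_E_def by blast
  then show "e \<in> spider_mid_edges k t"
  proof cases
    case short
    then have "{i, 0} \<notin> E'"
      using no_isolated_Diff_keeps_pendant[OF no_iso, of i 0]
        spider_adj_short_leg[where k = k and t = t and l = i] by (simp add: spider_V_iff)
    with short \<open>e \<in> E'\<close> show ?thesis by (simp add: insert_commute)
  next
    case mid
    then show ?thesis unfolding spider_mid_edges_def by auto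
  next
    case long
    then have "{i, t + i} \<notin> E'"
      using no_isolated_Diff_keeps_pendant[OF no_iso, of i "t + i"]
        spider_adj_long_leg_end[where i = i and k = k and t = t] by (simp add: spider_V_iff)
    with long \<open>e \<in> E'\<close> show ?thesis by (simp add: insert_commute)
  qed
qed

lemma sum_spider_weight: "sum (spider_weight k t) (spider_V k t) = 2 + 2 * (t - k)"
  unfolding sum_spider_V by (simp add: spider_weight_def sum.neutral)

lemma TRDF_spider_weight:
  assumes sub: "E' \<subseteq> spider_mid_edges k t" and w0: "w0 \<in> {t + 1 .. t + (t - k)}" "{0, w0} \<notin> E'"
  shows "TRDF (spider_V k t) (spider_E k t - E') (spider_weight k t)"
proof -
  let ?f = "spider_weight k t"
  have kept: "adj (spider_E k t - E') p q" if "adj (spider_E k t) p q" "{p, q} \<notin> spider_mid_edges k t" for p q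
    using that sub by (auto simp: adj_Diff)
  have zero: "\<exists>u\<in>spider_V k t. adj (spider_E k t - E') w u \<and> ?f u = 2"
    if "w \<in> spider_V k t" "?f w = 0" for w
    using that kept[of w 0]
    by (auto simp: spider_weight_def spider_adj mem_spider_mid_edges spider_V_iff split: if_splits)
  have positive: "\<exists>u\<in>spider_V k t. adj (spider_E k t - E') w u \<and> 0 < ?f u"
    if "w \<in> spider_V k t" "0 < ?f w" for w
  proof -
    have "w = 0 \<or> 1 \<le> w \<and> w \<le> t - k \<or> t < w \<and> w \<le> t + (t - k)"
      using that by (auto simp: spider_weight_def spider_V_iff split: if_splits)
    then consider "w = 0" | "1 \<le> w" "w \<le> t - k" | "t < w" "w \<le> t + (t - k)" by blast
    then show ?thesis
    proof cases
      case 1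
      with w0 k_less_t show ?thesis
        by (auto simp: spider_weight_def adj_Diff spider_adj spider_V_iff intro!: bexI[of _ w0])
    next
      case 2
      with kept[of w "t + w"] k_less_t show ?thesis
        by (auto simp: spider_weight_def spider_adj mem_spider_mid_edges spider_V_iff
            intro!: bexI[of _ "t + w"])
    next
      case 3
      with kept[of w "w - t"] k_less_t show ?thesis
        by (auto simp: spider_weight_def spider_adj mem_spider_mid_edges spider_V_iff
            intro!: bexI[of _ "w - t"])
    qed
  qed
  have "?f u \<le> 2" for u by (simp add: spider_weight_def)
  with zero positive show ?thesis unfolding TRDF_def by blast
qed

lemma spider_bad_set_card_ge:
  assumes bad: "bad_set (spider_V k t) (spider_E k t) E'"
  shows "t - k \<le> card E'"
proof (rule ccontr)
  assume "\<not> t - k \<le> card E'"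
  have sub: "E' \<subseteq> spider_mid_edges k t" using spider_bad_set_subset[OF bad] .
  have "finite (spider_mid_edges k t)" unfolding spider_mid_edges_def by simp
  then have "\<not> spider_mid_edges k t \<subseteq> E'"
    using \<open>\<not> t - k \<le> card E'\<close> card_mono[OF finite_subset[OF sub]] card_spider_mid_edges by metis
  then obtain w0 where "w0 \<in> {t + 1 .. t + (t - k)}" "{0, w0} \<notin> E'"
    unfolding spider_mid_edges_def by blast
  then have "gamma_tR (spider_V k t) (spider_E k t - E') \<le> 2 + 2 * (t - k)"
    using gamma_tR_le TRDF_spider_weight[OF sub] sum_spider_weight by metis
  also have "\<dots> \<le> gamma_tR (spider_V k t) (spider_E k t)"
    using gamma_tR_attained[OF spider_no_isolated] spider_TRDF_weight_ge by metis
  finally show False using bad unfolding bad_set_def by simp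
qed

theorem b_tR_spider: "b_tR (spider_V k t) (spider_E k t) = enat (t - k)"
proof -
  have "(LEAST c. \<exists>E'. bad_set (spider_V k t) (spider_E k t) E' \<and> card E' = c) = t - k"
    using bad_set_spider_mid_edges card_spider_mid_edges spider_bad_set_card_ge
    by (intro Least_equality) blast+
  then show ?thesis using bad_set_spider_mid_edges unfolding b_tR_def by auto
qed

end

theorem mainTheorem10:
  shows "(\<forall>(V :: 'a set) E r x v.
            tree V E \<and> r \<in> V \<and> x \<in> V \<and> x \<noteq> r
            \<and> (\<exists>y. child V E r x y)
            \<and> (\<forall>y. child V E r x y \<longrightarrow> leaf V E y)
            \<and> child V E r v x
          \<longrightarrow> (let ki = card {u \<in> nbrs V E v. leaf V E u};
                   ri = card {u \<in> nbrs V E x. leaf V E u}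
               in (ki \<ge> 1 \<and> ri \<ge> 2 \<longrightarrow> b_tR V E = 1)
                \<and> (ki \<ge> 2 \<and> ri = 1 \<longrightarrow> b_tR V E \<le> enat (deg V E v - ki))))
       \<and> (\<forall>t k :: nat. t \<ge> 3 \<and> 2 \<le> k \<and> k \<le> t - 1
            \<longrightarrow> b_tR (spider_V k t) (spider_E k t) = enat (t - k))"
proof (intro conjI allI impI)
  fix V :: "'a set" and E r x v
  assume "tree V E \<and> r \<in> V \<and> x \<in> V \<and> x \<noteq> r \<and> (\<exists>y. child V E r x y)
    \<and> (\<forall>y. child V E r x y \<longrightarrow> leaf V E y) \<and> child V E r v x"
  then obtain y where t: "tree V E" and r: "r \<in> V" and parent: "child V E r v x"
    and child: "child V E r x y" and children: "\<And>y. child V E r x y \<Longrightarrow> leaf V E y"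
    by blast
  show "let ki = card {u \<in> nbrs V E v. leaf V E u}; ri = card {u \<in> nbrs V E x. leaf V E u}
    in (ki \<ge> 1 \<and> ri \<ge> 2 \<longrightarrow> b_tR V E = 1) \<and> (ki \<ge> 2 \<and> ri = 1 \<longrightarrow> b_tR V E \<le> enat (deg V E v - ki))"
    using tree_b_tR_eq_1[OF t r parent children] tree_b_tR_le[OF t parent child children]
    by (simp add: Let_def)
next
  fix t k :: nat
  assume "t \<ge> 3 \<and> 2 \<le> k \<and> k \<le> t - 1"
  then show "b_tR (spider_V k t) (spider_E k t) = enat (t - k)" by (intro b_tR_spider) auto
qed

end
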